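(* For every $x\in\Gamma$ and $t\in\Gamma'_x$, the function $P_{x,t}$ defined below is a polynomial with real coefficients and positive leading coefficient. For every nonreal $z$ there is a nonzero function $v:\Gamma\to\mathbb C$ with $Jv=zv$ on all of $\Gamma$ and $v(t)=P_{x,t}(z)$ for all $t\in\Gamma'_x$. Moreover, if $y\in\Gamma_x$ and $t\in\Gamma'_y$ (so $\Gamma'_y\subset\Gamma'_x$), then $P_{y,t}$ divides $P_{x,t}$.
   Context: Let $\Gamma$ be an infinite connected tree whose vertices are arranged in levels $\ell(x)\in\{0,1,2,\dots\}$: every vertex $x$ is adjacent to exactly one vertex $x'$ with $\ell(x')=\ell(x)+1$; for $\ell(x)\ge 1$ the set $N_x=\{y:\ y'=x\}$ of neighbours of $x$ on level $\ell(x)-1$ is finite and nonempty; $N_x=\emptyset$ if $\ell(x)=0$; there are no other edges. For $x\in\Gamma$, $\Gamma_x$ is the finite subtree consisting of $x$ and all its descendants, and $\Gamma'_x=\Gamma_x\cup\{x'\}$. Fix $\lambda_x>0$, $\beta_x\in\mathbb R$. The Jacobi matrix $J$ acts on functions $v:\Gamma\to\mathbb C$ by $(Jv)(x)=\lambda_x v(x')+\beta_x v(x)+\sum_{y\in N_x}\lambda_y v(y)$. The functions $P_{x,t}$ ($x\in\Gamma$, $t\in\Gamma'_x$) of the variable $z$ are defined recursively on $\ell(x)$: if $\ell(x)=0$, $P_{x,x}=1$ and $P_{x,x'}(z)=(z-\beta_x)/\lambda_x$. If $\ell(x)\ge1$: $P_{x,x}$ is the monic least common multiple of the polynomials $\{P_{y,x}:\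 y\in N_x\}$; for $y\in N_x$ and $t\in\Gamma_y$, $P_{x,t}=P_{x,x}P_{y,t}/P_{y,x}$; and $P_{x,x'}=\lambda_x^{-1}\big((z-\beta_x)P_{x,x}-\sum_{y\in N_x}\lambda_yP_{x,y}\big)$. *)

theory Defs
  imports "HOL-Computational_Algebra.Computational_Algebra" "HOL-Computational_Algebra.Field_as_Ring"
begin

text \<open>The tree: vertices are the elements of the type 'a, p x is the parent x',
  lev x the level. children p x = N_x, desc p x = Gamma_x (x and its descendants).\<close>

definition children :: "('a \<Rightarrow> 'a) \<Rightarrow> 'a \<Rightarrow> 'a set" where
  "children p x = {y. p y = x}"

definition desc :: "('a \<Rightarrow> 'a) \<Rightarrow> 'a \<Rightarrow> 'a set" where
  "desc p x = {t. \<exists>k. (p ^^ k) t = x}"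

definition desc' :: "('a \<Rightarrow> 'a) \<Rightarrow> 'a \<Rightarrow> 'a set" where
  "desc' p x = insert (p x) (desc p x)"

definition tree_levels :: "('a \<Rightarrow> 'a) \<Rightarrow> ('a \<Rightarrow> nat) \<Rightarrow> bool" where
  "tree_levels p lev \<longleftrightarrow>
     (\<forall>x. lev (p x) = Suc (lev x)) \<and>
     (\<forall>x. lev x \<ge> 1 \<longrightarrow> finite (children p x) \<and> children p x \<noteq> {}) \<and>
     (\<forall>x. lev x = 0 \<longrightarrow> children p x = {}) \<and>
     (\<forall>x y. \<exists>m n. (p ^^ m) x = (p ^^ n) y)"

definition Jac :: "('a \<Rightarrow> 'a) \<Rightarrow> ('a \<Rightarrow> real) \<Rightarrow> ('a \<Rightarrow> real) \<Rightarrow> ('a \<Rightarrow> complex) \<Rightarrow> 'a \<Rightarrow> complex" where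
  "Jac p lam beta v x = of_real (lam x) * v (p x) + of_real (beta x) * v x
      + (\<Sum>y\<in>children p x. of_real (lam y) * v y)"

text \<open>Pfun n x t is P_{x,t} for lev x = n (recursion on the level); 0 outside Gamma'_x.\<close>
primrec Pfun :: "('a \<Rightarrow> 'a) \<Rightarrow> ('a \<Rightarrow> real) \<Rightarrow> ('a \<Rightarrow> real) \<Rightarrow> nat \<Rightarrow> 'a \<Rightarrow> 'a \<Rightarrow> real poly" where
  "Pfun p lam beta 0 x t =
     (if t = x then 1 else if t = p x then [:- beta x / lam x, 1 / lam x:] else 0)"
| "Pfun p lam beta (Suc n) x t =
     (let Q = Pfun p lam beta n;
          Pxx = Lcm ((\<lambda>y. Q y x) ` children p x)
      in if t = x then Pxx
         else if t = p x then
           smult (1 / lam x) ([:- beta x, 1:] * Pxx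
             - (\<Sum>y\<in>children p x. smult (lam y) (Pxx * Q y y div Q y x)))
         else if t \<in> desc p x then
           (let y = (THE y. y \<in> children p x \<and> t \<in> desc p y) in Pxx * Q y t div Q y x)
         else 0)"

definition Ptree :: "('a \<Rightarrow> 'a) \<Rightarrow> ('a \<Rightarrow> nat) \<Rightarrow> ('a \<Rightarrow> real) \<Rightarrow> ('a \<Rightarrow> real) \<Rightarrow> 'a \<Rightarrow> 'a \<Rightarrow> real poly" where
  "Ptree p lev lam beta x t = Pfun p lam beta (lev x) x t"

end

(*
  For a child y of x the construction gives P_{x,t} = q_y P_{y,t} on Gamma'_y with
  q_y = P_{x,x} / P_{y,x}; iterating, P_{w,.} is a polynomial multiple of P_{y,.} on Gamma'_y
  for every ancestor w of y, which is the divisibility.  The formula for P_{x,x'} is the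
  eigenvalue equation at x, so each P_{w,.}(z) solves Jv = zv at every vertex of Gamma_w.
  By induction on the level, all leading coefficients are positive and
  m_x = P_{x,x'} / P_{x,x} satisfies Im z * Im m_x(z) > 0 off the real axis: indeed
  lambda_x m_x = z - beta_x - sum_y lambda_y / (P_{y,x} / P_{y,y}), and the children's ratios
  have the same property.  In particular no P_{x,t} vanishes off the real axis, so for nonreal z
  the solutions on the nested subtrees Gamma_{x'^k} can be rescaled to agree at x, and they glue
  to an eigenvector on the whole tree.
*)

theory Submission
  imports Defs
begin

definition cpoly :: "real poly \<Rightarrow> complex \<Rightarrow> complex" where
  "cpoly q z = poly (map_poly complex_of_real q) z"

lemma cpoly_0 [simp]: "cpoly 0 z = 0"
  by (simp add: cpoly_def)

lemma cpoly_1 [simp]: "cpoly 1 z = 1"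
  by (simp add: cpoly_def)

lemma cpoly_pCons [simp]: "cpoly (pCons a q) z = of_real a + z * cpoly q z"
  by (simp add: cpoly_def map_poly_pCons)

lemma cpoly_add [simp]: "cpoly (q + r) z = cpoly q z + cpoly r z"
proof -
  have "map_poly complex_of_real (q + r) = map_poly of_real q + map_poly of_real r"
    by (intro poly_eqI) (simp add: coeff_map_poly)
  thus ?thesis by (simp add: cpoly_def)
qed

lemma cpoly_diff [simp]: "cpoly (q - r) z = cpoly q z - cpoly r z"
proof -
  have "map_poly complex_of_real (q - r) = map_poly of_real q - map_poly of_real r"
    by (intro poly_eqI) (simp add: coeff_map_poly)
  thus ?thesis by (simp add: cpoly_def)
qed

lemma cpoly_mult [simp]: "cpoly (q * r) z = cpoly q z * cpoly r z"
proof -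
  have "map_poly complex_of_real (q * r) = map_poly of_real q * map_poly of_real r"
    by (intro poly_eqI) (simp add: coeff_map_poly coeff_mult)
  thus ?thesis by (simp add: cpoly_def)
qed

lemma cpoly_smult [simp]: "cpoly (smult c q) z = of_real c * cpoly q z"
  by (simp add: cpoly_def map_poly_smult)

lemma cpoly_sum [simp]: "cpoly (sum f A) z = (\<Sum>a\<in>A. cpoly (f a) z)"
  by (induction A rule: infinite_finite_induct) simp_all

lemma cpoly_prod [simp]: "cpoly (prod f A) z = (\<Prod>a\<in>A. cpoly (f a) z)"
  by (induction A rule: infinite_finite_induct) simp_all

lemma lead_coeff_Lcm: "(Lcm A :: 'a::field_gcd poly) \<noteq> 0 \<Longrightarrow> lead_coeff (Lcm A) = 1"
proof -
  assume "Lcm A \<noteq> 0"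
  hence "is_unit (lead_coeff (Lcm A))" by (simp add: dvd_field_iff)
  thus ?thesis using unit_factor_Lcm[of A] \<open>Lcm A \<noteq> 0\<close>
    by (simp add: unit_factor_poly_def one_pCons is_unit_unit_factor)
qed

lemma
  fixes A S :: "'a::idom poly"
  assumes "lead_coeff A = 1" and "degree S < degree A"
  shows degree_linear_mult_minus: "degree ([:b, 1:] * A - S) = Suc (degree A)"
    and lead_coeff_linear_mult_minus: "lead_coeff ([:b, 1:] * A - S) = 1"
proof -
  define L where "L = [:b, 1:] * A"
  have "A \<noteq> 0" using assms(1) by auto
  hence degL: "degree L = Suc (degree A)"
    using degree_mult_eq[of "[:b, 1:]" A] by (simp add: L_def)
  have lcL: "lead_coeff L = 1"
    using assms(1) lead_coeff_mult[of "[:b, 1:]" A] by (simp only: L_def) simp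
  have "degree (- S) < degree L" using degL assms(2) by simp
  hence "degree (L - S) = degree L"
    by (metis degree_add_eq_left diff_conv_add_uminus)
  thus "degree ([:b, 1:] * A - S) = Suc (degree A)" using degL by (simp add: L_def)
  have "coeff S (degree L) = 0" using assms(2) degL by (intro coeff_eq_0) simp
  thus "lead_coeff ([:b, 1:] * A - S) = 1"
    using \<open>degree (L - S) = degree L\<close> lcL by (simp add: L_def)
qed

lemma Im_mult_minus_divide_pos:
  assumes "0 < Im z * Im w" and "0 < l"
  shows "0 < Im z * Im (- (of_real l / w))"
proof -
  have "w \<noteq> 0" using assms(1) by auto
  hence "Im z * Im (- (of_real l / w)) = l * (Im z * Im w) / (cmod w)\<^sup>2"
    by (simp add: Im_divide cmod_power2 field_simps)
  thus ?thesis using assms \<open>w \<noteq> 0\<close> by simp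
qed

lemma Im_mult_sub_sum_divide_pos:
  assumes "Im z \<noteq> 0" and "finite C" and "\<And>c. c \<in> C \<Longrightarrow> 0 < l c \<and> 0 < Im z * Im (r c)"
  shows "0 < Im z * Im (z - of_real b - (\<Sum>c\<in>C. of_real (l c) / r c))"
proof -
  have "Im z * Im (z - of_real b - (\<Sum>c\<in>C. of_real (l c) / r c))
      = Im z * Im z + (\<Sum>c\<in>C. Im z * Im (- (of_real (l c) / r c)))"
    by (simp add: sum_distrib_left sum_negf algebra_simps)
  moreover have "0 \<le> (\<Sum>c\<in>C. Im z * Im (- (of_real (l c) / r c)))"
    using assms(3) Im_mult_minus_divide_pos by (intro sum_nonneg less_imp_le) blast
  moreover have "0 < Im z * Im z" using assms(1) by (metis not_real_square_gt_zero)
  ultimately show ?thesis by linarith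
qed

locale leveled_tree =
  fixes p :: "'a \<Rightarrow> 'a" and lev :: "'a \<Rightarrow> nat"
  assumes tree: "tree_levels p lev"
begin

lemma lev_parent [simp]: "lev (p x) = Suc (lev x)"
  using tree by (simp add: tree_levels_def)

lemma parent_neq [simp]: "p x \<noteq> x"
  using lev_parent[of x] by (metis n_not_Suc_n)

lemma lev_funpow: "lev ((p ^^ k) x) = lev x + k"
  by (induction k) auto

lemma common_ancestor: "\<exists>m n. (p ^^ m) x = (p ^^ n) y"
  using tree by (simp add: tree_levels_def)

lemma finite_children: "finite (children p x)"
  using tree by (cases "lev x") (auto simp: tree_levels_def)

lemma children_nonempty: "lev x = Suc n \<Longrightarrow> children p x \<noteq> {}"
  using tree by (simp add: tree_levels_def)

lemma children_leaf: "lev x = 0 \<Longrightarrow> children p x = {}"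
  using tree by (simp add: tree_levels_def)

lemma parent_child: "c \<in> children p x \<Longrightarrow> p c = x"
  by (simp add: children_def)

lemma lev_child: "c \<in> children p x \<Longrightarrow> lev x = Suc (lev c)"
  by (auto simp: children_def)

lemma lev_desc: "t \<in> desc p x \<Longrightarrow> lev t \<le> lev x"
  by (auto simp: desc_def lev_funpow)

lemma self_in_desc [simp]: "x \<in> desc p x"
  unfolding desc_def by (rule CollectI, rule exI[of _ 0]) simp

lemma desc_subset_desc': "desc p x \<subseteq> desc' p x"
  by (auto simp: desc'_def)

lemma self_in_desc' [simp]: "x \<in> desc' p x" and parent_in_desc' [simp]: "p x \<in> desc' p x"
  by (simp_all add: desc'_def)

lemma parent_in_desc'_child: "c \<in> children p x \<Longrightarrow> x \<in> desc' p c"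
  using parent_in_desc'[of c] by (simp add: children_def)

lemma desc_trans: "u \<in> desc p w \<Longrightarrow> t \<in> desc p u \<Longrightarrow> t \<in> desc p w"
proof -
  assume "u \<in> desc p w" "t \<in> desc p u"
  then obtain k j where "(p ^^ k) u = w" "(p ^^ j) t = u" by (auto simp: desc_def)
  hence "(p ^^ (k + j)) t = w" by (simp add: funpow_add)
  thus ?thesis by (auto simp: desc_def)
qed

lemma child_in_desc: "c \<in> children p x \<Longrightarrow> c \<in> desc p x"
  unfolding desc_def children_def by (auto intro!: exI[of _ 1])

lemma child_in_desc': "c \<in> children p x \<Longrightarrow> c \<in> desc' p x"
  using child_in_desc desc_subset_desc' by blast

lemma desc_cases:
  assumes "t \<in> desc p x"
  obtains "t = x" | c where "c \<in> children p x" and "t \<in> desc p c"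
proof -
  obtain k where k: "(p ^^ k) t = x" using assms by (auto simp: desc_def)
  show thesis
  proof (cases k)
    case 0 thus thesis using k that(1) by simp
  next
    case (Suc j)
    hence "p ((p ^^ j) t) = x" using k by simp
    thus thesis using that(2) by (auto simp: children_def desc_def)
  qed
qed

lemma desc_leaf: "lev x = 0 \<Longrightarrow> desc p x = {x}"
proof -
  assume "lev x = 0"
  have "t = x" if "t \<in> desc p x" for t
    using that by (cases rule: desc_cases) (use children_leaf[OF \<open>lev x = 0\<close>] in auto)
  thus ?thesis by auto
qed

lemma desc_child_unique:
  assumes "c \<in> children p x" "d \<in> children p x" "t \<in> desc p c" "t \<in> desc p d"
  shows "c = d"
proof -
  obtain k j where k: "(p ^^ k) t = c" "(p ^^ j) t = d" using assms(3,4) by (auto simp: desc_def)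
  have "lev c = lev d" using lev_child[OF assms(1)] lev_child[OF assms(2)] by simp
  hence "k = j" using k lev_funpow by (metis add_left_cancel)
  thus ?thesis using k by simp
qed

lemma desc'_mono: "u \<in> desc p w \<Longrightarrow> desc' p u \<subseteq> desc' p w"
proof -
  assume u: "u \<in> desc p w"
  then obtain k where k: "(p ^^ k) u = w" by (auto simp: desc_def)
  have "p u \<in> desc' p w"
  proof (cases k)
    case 0 thus ?thesis using k by simp
  next
    case (Suc j)
    hence "(p ^^ j) (p u) = w" using k by (simp add: funpow_Suc_right del: funpow.simps)
    thus ?thesis by (auto simp: desc'_def desc_def)
  qed
  thus ?thesis using desc_trans[OF u] by (auto simp: desc'_def)
qed

end

locale jacobi_tree = leveled_tree p lev for p :: "'a \<Rightarrow> 'a" and lev +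
  fixes lam beta :: "'a \<Rightarrow> real"
  assumes lam_pos: "0 < lam x"
begin

abbreviation P :: "'a \<Rightarrow> 'a \<Rightarrow> real poly" where
  "P \<equiv> Ptree p lev lam beta"

lemma P_leaf_self: "lev x = 0 \<Longrightarrow> P x x = 1"
  by (simp add: Ptree_def)

lemma P_leaf_parent: "lev x = 0 \<Longrightarrow> P x (p x) = [:- beta x / lam x, 1 / lam x:]"
  by (simp add: Ptree_def)

lemma Pfun_child: "lev x = Suc n \<Longrightarrow> c \<in> children p x \<Longrightarrow> Pfun p lam beta n c = P c"
  using lev_child[of c x] by (auto simp: Ptree_def fun_eq_iff)

lemma P_self: "lev x = Suc n \<Longrightarrow> P x x = Lcm ((\<lambda>c. P c x) ` children p x)"
  using Pfun_child[of x n] by (simp add: Ptree_def Let_def cong: image_cong)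

lemma P_desc_child:
  assumes x: "lev x = Suc n" and c: "c \<in> children p x" and t: "t \<in> desc p c"
  shows "P x t = P x x * P c t div P c x"
proof -
  have "t \<noteq> x" and "t \<noteq> p x" using lev_desc[OF t] lev_child[OF c] by auto
  moreover have "t \<in> desc p x" using desc_trans[OF child_in_desc[OF c] t] .
  moreover have "(THE d. d \<in> children p x \<and> t \<in> desc p d) = c"
    using c t desc_child_unique by blast
  ultimately show ?thesis
    using x c P_self[OF x] Pfun_child[OF x] by (simp add: Ptree_def Let_def cong: image_cong)
qed

lemma P_parent_recurrence:
  "smult (lam x) (P x (p x)) = [:- beta x, 1:] * P x x - (\<Sum>c\<in>children p x. smult (lam c) (P x c))"
proof (cases "lev x")
  case 0
  thus ?thesis using lam_pos[of x] by (simp add: P_leaf_self P_leaf_parent children_leaf)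
next
  case (Suc n)
  have "(\<Sum>c\<in>children p x. smult (lam c) (P x x * Pfun p lam beta n c c div Pfun p lam beta n c x))
      = (\<Sum>c\<in>children p x. smult (lam c) (P x c))"
    using P_desc_child[OF Suc] Pfun_child[OF Suc] by (intro sum.cong) auto
  thus ?thesis
    using Suc lam_pos[of x] P_self[OF Suc] Pfun_child[OF Suc]
    by (simp add: Ptree_def Let_def cong: image_cong)
qed

lemma P_child_factor:
  assumes c: "c \<in> children p x" and nz: "P c x \<noteq> 0"
  obtains q where "\<And>t. t \<in> desc' p c \<Longrightarrow> P x t = q * P c t"
proof
  define q where "q = P x x div P c x"
  have x: "lev x = Suc (lev c)" and pc: "p c = x"
    using lev_child[OF c] parent_child[OF c] by simp_all
  have "P c x dvd P x x" using P_self[OF x] c by (simp add: dvd_Lcm)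
  hence self: "P x x = q * P c x" by (simp add: q_def)
  fix t assume "t \<in> desc' p c"
  then consider "t = x" | "t \<in> desc p c" using pc by (auto simp: desc'_def)
  thus "P x t = q * P c t"
  proof cases
    case 2
    have "P x t = P c x * (q * P c t) div P c x"
      using P_desc_child[OF x c 2] by (simp add: self ac_simps)
    thus ?thesis using nz by simp
  qed (use self in simp)
qed

lemma cpoly_recurrence:
  assumes "\<And>t. t \<in> desc' p u \<Longrightarrow> Q t = F * P u t"
  shows "of_real (lam u) * cpoly (Q (p u)) z + of_real (beta u) * cpoly (Q u) z
      + (\<Sum>c\<in>children p u. of_real (lam c) * cpoly (Q c) z) = z * cpoly (Q u) z"
proof -
  have Q: "Q (p u) = F * P u (p u)" "Q u = F * P u u" using assms by simp_all
  have "(\<Sum>c\<in>children p u. smult (lam c) (Q c)) = (\<Sum>c\<in>children p u. F * smult (lam c) (P u c))"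
    using assms child_in_desc' by (intro sum.cong) (simp_all add: mult_smult_right)
  hence "smult (lam u) (Q (p u)) = [:- beta u, 1:] * Q u - (\<Sum>c\<in>children p u. smult (lam c) (Q c))"
    using arg_cong[OF P_parent_recurrence[of u], of "(*) F"]
    by (simp add: Q sum_distrib_left right_diff_distrib mult.left_commute)
  from arg_cong[OF this, of "\<lambda>q. cpoly q z"] show ?thesis
    by (simp add: algebra_simps)
qed

text \<open>The degree clause keeps the sum in the recurrence for the parent below the degree of
  \<open>P x x\<close>, which fixes the leading coefficient of \<open>P x (p x)\<close>.\<close>

definition herglotz_vertex :: "'a \<Rightarrow> bool" where
  "herglotz_vertex x \<longleftrightarrow>
     degree (P x (p x)) = Suc (degree (P x x)) \<and> (\<forall>t\<in>desc' p x. 0 < lead_coeff (P x t)) \<and>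
     (\<forall>z. Im z \<noteq> 0 \<longrightarrow> (\<forall>t\<in>desc' p x. cpoly (P x t) z \<noteq> 0)
        \<and> 0 < Im z * Im (cpoly (P x (p x)) z / cpoly (P x x) z))"

lemma herglotz_vertexD:
  assumes "herglotz_vertex x"
  shows "degree (P x (p x)) = Suc (degree (P x x))"
    and "t \<in> desc' p x \<Longrightarrow> 0 < lead_coeff (P x t)"
    and "t \<in> desc' p x \<Longrightarrow> Im z \<noteq> 0 \<Longrightarrow> cpoly (P x t) z \<noteq> 0"
    and "Im z \<noteq> 0 \<Longrightarrow> 0 < Im z * Im (cpoly (P x (p x)) z / cpoly (P x x) z)"
  using assms by (auto simp: herglotz_vertex_def)

lemma herglotz_vertex_leaf:
  assumes x: "lev x = 0"
  shows "herglotz_vertex x"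
proof -
  have l: "0 < lam x" by (rule lam_pos)
  have D: "desc' p x = {x, p x}" using desc_leaf[OF x] by (auto simp: desc'_def)
  have ratio: "cpoly (P x (p x)) z = (z - of_real (beta x)) / of_real (lam x)" for z
    using x l by (simp add: P_leaf_parent field_simps)
  have Im_ratio: "Im (cpoly (P x (p x)) z) = Im z / lam x" for z
    by (simp add: ratio Im_divide_of_real)
  have Im_pos: "0 < Im z * Im (cpoly (P x (p x)) z / cpoly (P x x) z)" if "Im z \<noteq> 0" for z
    using that l P_leaf_self[OF x] Im_ratio[of z]
    by (metis cpoly_1 div_by_1 divide_pos_pos not_real_square_gt_zero times_divide_eq_right)
  have nz: "\<forall>t\<in>{x, p x}. cpoly (P x t) z \<noteq> 0" if "Im z \<noteq> 0" for z
    using that Im_ratio[of z] l P_leaf_self[OF x] by auto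
  have "degree (P x (p x)) = Suc (degree (P x x))" and "\<forall>t\<in>{x, p x}. 0 < lead_coeff (P x t)"
    using x l by (simp_all add: P_leaf_self P_leaf_parent)
  thus ?thesis
    unfolding herglotz_vertex_def D using Im_pos nz by blast
qed

text \<open>One continued-fraction step: \<open>lam x * P x (p x) / P x x\<close> equals
  \<open>z - beta x - (\<Sum>c. lam c / (P x x / P x c))\<close>, and each open half plane is preserved.\<close>

lemma Im_parent_ratio_pos:
  assumes z: "Im z \<noteq> 0" and nz: "cpoly (P x x) z \<noteq> 0"
    and children: "\<And>c. c \<in> children p x \<Longrightarrow> 0 < Im z * Im (cpoly (P x x) z / cpoly (P x c) z)"
  shows "0 < Im z * Im (cpoly (P x (p x)) z / cpoly (P x x) z)"
proof -
  let ?E = "\<lambda>t. cpoly (P x t) z"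
  let ?S = "\<Sum>c\<in>children p x. of_real (lam c) * ?E c"
  have "of_real (lam x) * ?E (p x) + of_real (beta x) * ?E x + ?S = z * ?E x"
    by (rule cpoly_recurrence[where F = 1]) simp
  hence "of_real (lam x) * ?E (p x) = (z - of_real (beta x)) * ?E x - ?S"
    by (simp add: algebra_simps)
  hence "of_real (lam x) * (?E (p x) / ?E x) = z - of_real (beta x) - ?S / ?E x"
    using nz by (simp add: diff_divide_distrib)
  also have "?S / ?E x = (\<Sum>c\<in>children p x. of_real (lam c) / (?E x / ?E c))"
    by (simp add: sum_divide_distrib)
  finally have "0 < Im z * Im (of_real (lam x) * (?E (p x) / ?E x))"
    using z finite_children children lam_pos by (simp only:) (intro Im_mult_sub_sum_divide_pos; auto)
  also have "Im z * Im (of_real (lam x) * (?E (p x) / ?E x)) = lam x * (Im z * Im (?E (p x) / ?E x))"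
    by (simp only: times_complex.sel Im_complex_of_real Re_complex_of_real) simp
  finally show ?thesis using lam_pos[of x] by (simp add: zero_less_mult_iff)
qed

lemma lead_coeff_P_self:
  assumes "lev x = Suc n" and "\<And>c. c \<in> children p x \<Longrightarrow> P c x \<noteq> 0"
  shows "lead_coeff (P x x) = 1"
proof -
  have "Lcm ((\<lambda>c. P c x) ` children p x) \<noteq> 0"
    using assms(2) finite_children by (auto simp: Lcm_0_iff)
  thus ?thesis using P_self[OF assms(1)] by (simp add: lead_coeff_Lcm)
qed

lemma cpoly_P_self_nonzero:
  assumes "lev x = Suc n" and "\<And>c. c \<in> children p x \<Longrightarrow> cpoly (P c x) z \<noteq> 0"
  shows "cpoly (P x x) z \<noteq> 0"
proof -
  have "P x x dvd (\<Prod>c\<in>children p x. P c x)"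
    unfolding P_self[OF assms(1)] by (rule Lcm_least) (auto intro: dvd_prodI finite_children)
  then obtain k where "(\<Prod>c\<in>children p x. P c x) = P x x * k" by (elim dvdE)
  from arg_cong[OF this, of "\<lambda>q. cpoly q z"] show ?thesis
    using assms(2) finite_children by auto
qed

lemma
  assumes "children p x \<noteq> {}" and "lead_coeff (P x x) = 1"
    and "\<And>c. c \<in> children p x \<Longrightarrow> degree (P x c) < degree (P x x)"
  shows degree_P_parent: "degree (P x (p x)) = Suc (degree (P x x))"
    and lead_coeff_P_parent: "0 < lead_coeff (P x (p x))"
proof -
  let ?S = "\<Sum>c\<in>children p x. smult (lam c) (P x c)"
  have "0 < degree (P x x)" using assms(1,3) by (metis all_not_in_conv gr0I not_less0)
  hence "degree ?S < degree (P x x)"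
    using assms(3) by (intro degree_sum_less) (auto intro: le_less_trans[OF degree_smult_le])
  note deg_S = this
  have rec: "smult (lam x) (P x (p x)) = [:- beta x, 1:] * P x x - ?S"
    by (rule P_parent_recurrence)
  have lam: "lam x \<noteq> 0" using lam_pos[of x] by simp
  have "degree (P x (p x)) = degree (smult (lam x) (P x (p x)))" using lam by simp
  also have "\<dots> = Suc (degree (P x x))"
    unfolding rec by (rule degree_linear_mult_minus[OF assms(2) deg_S])
  finally show "degree (P x (p x)) = Suc (degree (P x x))" .
  have "lam x * lead_coeff (P x (p x)) = lead_coeff (smult (lam x) (P x (p x)))" using lam by simp
  also have "\<dots> = 1"
    unfolding rec by (rule lead_coeff_linear_mult_minus[OF assms(2) deg_S])
  finally show "0 < lead_coeff (P x (p x))"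
    using lam_pos[of x] by (metis zero_less_mult_pos zero_less_one)
qed

lemma P_children_factor:
  assumes x: "lev x = Suc n"
    and lc: "\<And>c. c \<in> children p x \<Longrightarrow> 0 < lead_coeff (P c x)"
    and ev: "\<And>c z. c \<in> children p x \<Longrightarrow> Im z \<noteq> 0 \<Longrightarrow> cpoly (P c x) z \<noteq> 0"
  obtains q where "\<And>c t. c \<in> children p x \<Longrightarrow> t \<in> desc' p c \<Longrightarrow> P x t = q c * P c t"
    and "\<And>c. c \<in> children p x \<Longrightarrow> 0 < lead_coeff (q c)"
    and "\<And>c z. c \<in> children p x \<Longrightarrow> Im z \<noteq> 0 \<Longrightarrow> cpoly (q c) z \<noteq> 0"
proof -
  have nz: "P c x \<noteq> 0" if "c \<in> children p x" for c
    using lc[OF that] by auto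
  have "\<forall>c\<in>children p x. \<exists>q. \<forall>t\<in>desc' p c. P x t = q * P c t"
    using P_child_factor nz by metis
  then obtain q where q: "\<And>c t. c \<in> children p x \<Longrightarrow> t \<in> desc' p c \<Longrightarrow> P x t = q c * P c t"
    by metis
  have self: "P x x = q c * P c x" if "c \<in> children p x" for c
    using q[OF that parent_in_desc'_child[OF that]] .
  have "0 < lead_coeff (q c)" if "c \<in> children p x" for c
    using lead_coeff_P_self[OF x nz] lc[OF that] self[OF that]
    by (metis lead_coeff_mult zero_less_mult_pos2 zero_less_one)
  moreover have "cpoly (q c) z \<noteq> 0" if "c \<in> children p x" "Im z \<noteq> 0" for c z
    using cpoly_P_self_nonzero[OF x ev[OF _ that(2)]] self[OF that(1)] by auto
  ultimately show thesis using that q by blast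
qed

lemma herglotz_vertex_step:
  assumes x: "lev x = Suc n" and IH: "\<And>c. c \<in> children p x \<Longrightarrow> herglotz_vertex c"
  shows "herglotz_vertex x"
proof -
  let ?C = "children p x"
  have lc_cx: "0 < lead_coeff (P c x)" if "c \<in> ?C" for c
    using herglotz_vertexD(2)[OF IH[OF that] parent_in_desc'_child[OF that]] .
  have ev_cx: "cpoly (P c x) z \<noteq> 0" if "c \<in> ?C" "Im z \<noteq> 0" for c z
    using herglotz_vertexD(3)[OF IH[OF that(1)] parent_in_desc'_child[OF that(1)] that(2)] .
  obtain q where q: "\<And>c t. c \<in> ?C \<Longrightarrow> t \<in> desc' p c \<Longrightarrow> P x t = q c * P c t"
    and lc_q: "\<And>c. c \<in> ?C \<Longrightarrow> 0 < lead_coeff (q c)"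
    and ev_q: "\<And>c z. c \<in> ?C \<Longrightarrow> Im z \<noteq> 0 \<Longrightarrow> cpoly (q c) z \<noteq> 0"
    using P_children_factor[OF x lc_cx ev_cx] by blast
  have self: "P x x = q c * P c x" if "c \<in> ?C" for c
    using q[OF that parent_in_desc'_child[OF that]] .
  have lc_self: "lead_coeff (P x x) = 1"
    using lead_coeff_P_self[OF x] lc_cx by (metis leading_coeff_0_iff less_irrefl)
  have ev_self: "cpoly (P x x) z \<noteq> 0" if "Im z \<noteq> 0" for z
    using cpoly_P_self_nonzero[OF x ev_cx[OF _ that]] .
  have deg_c: "degree (P x c) < degree (P x x)" if "c \<in> ?C" for c
  proof -
    have "q c \<noteq> 0" and "P c c \<noteq> 0" and "P c x \<noteq> 0"
      using lc_q[OF that] herglotz_vertexD(2)[OF IH[OF that] self_in_desc'] lc_cx[OF that] by auto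
    thus ?thesis
      using q[OF that self_in_desc'] self[OF that] herglotz_vertexD(1)[OF IH[OF that]]
        parent_child[OF that] by (simp add: degree_mult_eq)
  qed
  have ratio_c: "cpoly (P x x) z / cpoly (P x c) z = cpoly (P c x) z / cpoly (P c c) z"
    if "c \<in> ?C" "Im z \<noteq> 0" for c z
    using q[OF that(1) self_in_desc'] self[OF that(1)] ev_q[OF that] by simp
  have Im_pos: "0 < Im z * Im (cpoly (P x (p x)) z / cpoly (P x x) z)" if "Im z \<noteq> 0" for z
    using that ev_self[OF that] ratio_c herglotz_vertexD(4)[OF IH] parent_child
    by (intro Im_parent_ratio_pos) auto
  have desc: "0 < lead_coeff (P x t) \<and> (\<forall>z. Im z \<noteq> 0 \<longrightarrow> cpoly (P x t) z \<noteq> 0)"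
    if "t \<in> desc p x" for t
    using that
  proof (cases rule: desc_cases)
    case (2 c)
    hence t: "t \<in> desc' p c" using desc_subset_desc' by blast
    show ?thesis
      using q[OF 2(1) t] lc_q[OF 2(1)] ev_q[OF 2(1)] herglotz_vertexD(2,3)[OF IH[OF 2(1)] t]
      by (simp add: lead_coeff_mult)
  qed (use lc_self ev_self in simp)
  have ev_parent: "cpoly (P x (p x)) z \<noteq> 0" if "Im z \<noteq> 0" for z
    using Im_pos[OF that] by auto
  show ?thesis
    unfolding herglotz_vertex_def desc'_def
    using degree_P_parent[OF children_nonempty[OF x] lc_self deg_c]
      lead_coeff_P_parent[OF children_nonempty[OF x] lc_self deg_c] Im_pos ev_parent desc
    by blast
qed

lemma herglotz_vertex: "herglotz_vertex x"
proof (induction "lev x" arbitrary: x)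
  case 0
  thus ?case by (simp add: herglotz_vertex_leaf)
next
  case (Suc n)
  thus ?case using lev_child by (intro herglotz_vertex_step[of x n]) auto
qed

lemma P_ancestor_factor:
  assumes "u \<in> desc p w"
  obtains F where "\<And>t. t \<in> desc' p u \<Longrightarrow> P w t = F * P u t"
proof -
  have factor: "\<exists>F. \<forall>t\<in>desc' p u. P w t = F * P u t" if "(p ^^ k) u = w" for k u
    using that
  proof (induction k arbitrary: u)
    case 0
    thus ?case by (intro exI[of _ 1]) simp
  next
    case (Suc k)
    hence "(p ^^ k) (p u) = w" by (simp add: funpow_Suc_right del: funpow.simps)
    then obtain F where F: "\<forall>t\<in>desc' p (p u). P w t = F * P (p u) t" using Suc.IH by blast
    have c: "u \<in> children p (p u)" by (simp add: children_def)
    have "0 < lead_coeff (P u (p u))" by (rule herglotz_vertexD(2)[OF herglotz_vertex parent_in_desc'])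
    hence "P u (p u) \<noteq> 0" by auto
    then obtain q where q: "\<And>t. t \<in> desc' p u \<Longrightarrow> P (p u) t = q * P u t"
      using P_child_factor[OF c] by blast
    have "desc' p u \<subseteq> desc' p (p u)" using desc'_mono[OF child_in_desc[OF c]] .
    thus ?case using F q by (intro exI[of _ "F * q"]) auto
  qed
  obtain k where "(p ^^ k) u = w" using assms by (auto simp: desc_def)
  from factor[OF this] show thesis using that by blast
qed

lemma cpoly_ratio_ancestor:
  assumes "u \<in> desc p w" and "s \<in> desc' p u" and "x \<in> desc' p u" and "Im z \<noteq> 0"
  shows "cpoly (P w s) z / cpoly (P w x) z = cpoly (P u s) z / cpoly (P u x) z"
proof -
  obtain F where F: "\<And>t. t \<in> desc' p u \<Longrightarrow> P w t = F * P u t"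
    using P_ancestor_factor[OF assms(1)] by blast
  have "u \<in> desc' p w" using assms(1) desc_subset_desc' by blast
  hence "cpoly (P w u) z \<noteq> 0" using herglotz_vertexD(3)[OF herglotz_vertex _ assms(4)] by blast
  hence "cpoly F z \<noteq> 0" using F[OF self_in_desc'] by auto
  thus ?thesis using F[OF assms(2)] F[OF assms(3)] by simp
qed

text \<open>At a vertex \<open>s\<close>, \<open>v s\<close> is \<open>P w s\<close> rescaled to take the value \<open>P x x\<close> at \<open>x\<close>,
  for any ancestor \<open>w\<close> of \<open>x\<close> whose subtree contains \<open>s\<close>; by \<open>cpoly_ratio_ancestor\<close>
  the choice of \<open>w\<close> does not matter.\<close>

lemma eigenvector_extending_P:
  assumes z: "Im z \<noteq> 0"
  obtains v where "v \<noteq> (\<lambda>_. 0)" and "\<And>u. Jac p lam beta v u = z * v u"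
    and "\<And>t. t \<in> desc' p x \<Longrightarrow> v t = cpoly (P x t) z"
proof -
  define anc where "anc k = (p ^^ k) x" for k
  define R where "R k s = cpoly (P (anc k) s) z / cpoly (P (anc k) x) z" for k s
  have ancestor: "anc k \<in> desc p (anc K)" if "k \<le> K" for k K
  proof -
    have "(p ^^ (K - k)) (anc k) = (p ^^ (K - k + k)) x" by (simp add: anc_def funpow_add)
    hence "(p ^^ (K - k)) (anc k) = anc K" using that by (simp add: anc_def)
    thus ?thesis by (auto simp: desc_def)
  qed
  have x_below: "x \<in> desc' p (anc k)" for k
    using desc_subset_desc' by (auto simp: desc_def anc_def)
  have R_stable: "R K s = R k s" if "k \<le> K" and "s \<in> desc' p (anc k)" for k K s
    unfolding R_def using cpoly_ratio_ancestor[OF ancestor[OF that(1)] that(2) x_below z] .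
  have covered: "\<exists>k. s \<in> desc p (anc k)" for s
    using common_ancestor[of s x] by (auto simp: desc_def anc_def)
  define v where "v s = cpoly (P x x) z * R (SOME k. s \<in> desc p (anc k)) s" for s
  have v: "v s = cpoly (P x x) z * R K s" if "s \<in> desc' p (anc K)" for s K
  proof -
    define k where "k = (SOME k. s \<in> desc p (anc k))"
    have "s \<in> desc' p (anc k)"
      unfolding k_def using someI_ex[OF covered] desc_subset_desc' by blast
    thus ?thesis using R_stable that by (cases "k \<le> K") (auto simp: v_def simp flip: k_def)
  qed
  have eigen: "Jac p lam beta v u = z * v u" for u
  proof -
    obtain K where K: "u \<in> desc p (anc K)" using covered by blast
    let ?E = "\<lambda>t. cpoly (P (anc K) t) z"
    define c where "c = cpoly (P x x) z / ?E x"
    have vt: "v t = c * ?E t" if "t \<in> desc' p u" for t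
      using v[of t K] desc'_mono[OF K] that by (auto simp: R_def c_def)
    obtain F where "\<And>t. t \<in> desc' p u \<Longrightarrow> P (anc K) t = F * P u t"
      using P_ancestor_factor[OF K] by blast
    hence rec: "of_real (lam u) * ?E (p u) + of_real (beta u) * ?E u
      + (\<Sum>y\<in>children p u. of_real (lam y) * ?E y) = z * ?E u"
      by (rule cpoly_recurrence)
    have "(\<Sum>y\<in>children p u. of_real (lam y) * v y) = c * (\<Sum>y\<in>children p u. of_real (lam y) * ?E y)"
      unfolding sum_distrib_left by (rule sum.cong) (simp_all add: vt child_in_desc')
    hence "Jac p lam beta v u = c * (of_real (lam u) * ?E (p u) + of_real (beta u) * ?E u
      + (\<Sum>y\<in>children p u. of_real (lam y) * ?E y))"
      unfolding Jac_def by (simp add: vt distrib_left)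
    thus ?thesis unfolding rec by (simp add: vt)
  qed
  have extends: "v t = cpoly (P x t) z" if "t \<in> desc' p x" for t
    using v[of t 0] that herglotz_vertexD(3)[OF herglotz_vertex self_in_desc' z]
    by (simp add: anc_def R_def)
  have "v x \<noteq> 0"
    using extends[OF self_in_desc'] herglotz_vertexD(3)[OF herglotz_vertex self_in_desc' z] by simp
  hence "v \<noteq> (\<lambda>_. 0)" by auto
  from that[OF this eigen extends] show thesis .
qed

end

theorem proposition1:
  fixes p :: "'a \<Rightarrow> 'a" and lev :: "'a \<Rightarrow> nat" and lam beta :: "'a \<Rightarrow> real"
  assumes tree: "tree_levels p lev"
    and lam_pos: "\<forall>x. lam x > 0"
  shows "\<forall>x. (\<forall>t\<in>desc' p x. lead_coeff (Ptree p lev lam beta x t) > 0)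
          \<and> (\<forall>z::complex. Im z \<noteq> 0 \<longrightarrow>
               (\<exists>v::'a \<Rightarrow> complex. v \<noteq> (\<lambda>_. 0) \<and> (\<forall>u. Jac p lam beta v u = z * v u)
                  \<and> (\<forall>t\<in>desc' p x. v t = poly (map_poly complex_of_real (Ptree p lev lam beta x t)) z)))
          \<and> (\<forall>y\<in>desc p x. \<forall>t\<in>desc' p y. Ptree p lev lam beta y t dvd Ptree p lev lam beta x t)"
proof -
  interpret jacobi_tree p lev lam beta
    using assms by unfold_locales auto
  show ?thesis
  proof (intro allI conjI ballI impI)
    fix x t assume "t \<in> desc' p x"
    thus "0 < lead_coeff (P x t)" by (rule herglotz_vertexD(2)[OF herglotz_vertex])
  next
    fix x and z :: complex assume "Im z \<noteq> 0"
    then obtain v where "v \<noteq> (\<lambda>_. 0)" "\<And>u. Jac p lam beta v u = z * v u"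
      and "\<And>t. t \<in> desc' p x \<Longrightarrow> v t = cpoly (P x t) z"
      using eigenvector_extending_P[where x = x] by blast
    thus "\<exists>v. v \<noteq> (\<lambda>_. 0) \<and> (\<forall>u. Jac p lam beta v u = z * v u)
        \<and> (\<forall>t\<in>desc' p x. v t = poly (map_poly complex_of_real (P x t)) z)"
      unfolding cpoly_def by blast
  next
    fix x y t assume "y \<in> desc p x" and "t \<in> desc' p y"
    thus "P y t dvd P x t" by (metis P_ancestor_factor dvd_triv_right)
  qed
qed

end
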